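(* (Restricted sum formula) For any positive integers $k,n,m$ with $k\ge n$, $$\sum_{\substack{k_1+\cdots+k_n=k\\ k_i\ge1}}\zeta^t(2mk_1,\ldots,2mk_n)=\left\{\sum_{i=1}^n\left[\sum_{j=0}^{k-i}\binom{k-j}{i}\sum_{\substack{n_0+\cdots+n_{m-1}=mj,\ l_0+\cdots+l_{m-1}=m(k-j)\\ n_p,l_p\ge0}}\prod_{p=0}^{m-1}\frac{\beta_{2n_p}}{(2n_p)!(2l_p+1)!}\,\rho_m^{\sum_{p=0}^{m-1}2p(n_p+l_p)}\right](-1)^i\binom{k-i}{k-n}t^{n-i}\right\}\frac{\lambda^{2km}}{4^{km}},$$ where $\rho_m=e^{\pi\sqrt{-1}/m}$, $\lambda=2\pi\sqrt{-1}$ and $\beta_{2l}=B_{2l}(2-4^l)$.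
   Context: $B_n$ are the Bernoulli numbers, $u/(e^u-1)=\sum_{n\ge0}B_nu^n/n!$; $t$ is a variable. For positive integers with $k_1\ge2$, $\zeta(k_1,\ldots,k_n)=\sum_{m_1>\cdots>m_n>0}\prod m_j^{-k_j}$ and the interpolated multiple zeta value is $\zeta^t(k_1,\ldots,k_n)=\sum_{\mathbf p}t^{n-\mathrm{dep}(\mathbf p)}\zeta(\mathbf p)$, summed over all sequences $\mathbf p$ obtained from $(k_1,\ldots,k_n)$ by replacing each separating comma by either a comma or a plus sign ($\mathrm{dep}$ = length). *)

theory Defs
  imports "HOL-Analysis.Analysis" "HOL-Computational_Algebra.Formal_Power_Series"
begin

definition bernoulli :: "nat \<Rightarrow> real" where
  "bernoulli n = fact n * fps_nth (fps_X / (fps_exp 1 - 1)) n"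

text \<open>beta_{2l} = B_{2l} (2 - 4^l); argument is l\<close>
definition beta2 :: "nat \<Rightarrow> real" where
  "beta2 l = bernoulli (2*l) * (2 - 4^l)"

definition mzv :: "nat list \<Rightarrow> real" where
  "mzv ks = (\<Sum>\<^sub>\<infinity> ms \<in> {ms. length ms = length ks \<and> sorted_wrt (>) ms \<and> (\<forall>x\<in>set ms. x > 0)}.
              \<Prod>j<length ks. 1 / real (ms ! j) ^ (ks ! j))"

text \<open>All sequences obtained by replacing each separating comma by a comma or a plus sign\<close>
fun merges :: "nat list \<Rightarrow> nat list list" where
  "merges [] = [[]]"
| "merges [a] = [[a]]"
| "merges (a # b # rest) =
     map (\<lambda>l. a # l) (merges (b # rest)) @ map (\<lambda>l. (a + hd l) # tl l) (merges (b # rest))"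

definition mzv_t :: "complex \<Rightarrow> nat list \<Rightarrow> complex" where
  "mzv_t t ks = (\<Sum>p \<leftarrow> merges ks. t ^ (length ks - length p) * complex_of_real (mzv p))"

end

theory Submission
  imports Defs "HOL-Computational_Algebra.Fundamental_Theorem_Algebra"
    "HOL-Computational_Algebra.Polynomial_FPS"
begin

(*
  Let F_e(X) = sum_l (-1)^l zeta(e,...,e) X^l, with l arguments e; it is the coefficientwise
  limit of the products prod_{j<=N} (1 - X / j^e). Summing zeta(e a_1,...,e a_r) over all
  compositions (a_1,...,a_r) of k gives the coefficient of X^k y^r in F_e((1 - y) X) / F_e(X),
  and expanding zeta^t by merging commas counts every composition of k into r parts
  C(k-r, n-r) times, with weight t^(n-r).
  For e = 2m, factoring 1 - X^m over the m-th roots of unity w gives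
  F_2m(X^m) = prod_{p<m} F_2(w^p X). By the sine product, F_2(-x^2/pi^2) = sinh x / x, whose
  reciprocal x / sinh x = sum_l beta_2l x^2l / (2l)! generates the numbers beta_2l; comparing
  coefficients of X^(mk) gives the formula.
*)

no_notation vec_nth (infixl \<open>$\<close> 90)
notation fps_nth (infixl \<open>$\<close> 75)

section \<open>Truncated multiple zeta values\<close>

fun mzv_trunc :: "nat \<Rightarrow> nat list \<Rightarrow> real" where
  "mzv_trunc N [] = 1"
| "mzv_trunc N (k # ks) = (\<Sum>j=1..N. 1 / real j ^ k * mzv_trunc (j - 1) ks)"

lemma mzv_trunc_0_Cons [simp]: "mzv_trunc 0 (k # ks) = 0"
  by simp

lemma mzv_trunc_Suc_Cons:
  "mzv_trunc (Suc N) (k # ks) = mzv_trunc N (k # ks) + 1 / real (Suc N) ^ k * mzv_trunc N ks"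
  by simp

declare mzv_trunc.simps(2) [simp del]

lemma mzv_trunc_nonneg: "mzv_trunc N ks \<ge> 0"
  by (induction ks arbitrary: N) (auto simp: mzv_trunc.simps intro!: sum_nonneg)

lemma sum_inverse_squares_le: "(\<Sum>j=1..N. 1 / real j ^ 2) \<le> 2 - 1 / real (max N 1)"
proof (induction N)
  case (Suc N)
  show ?case
  proof (cases "N = 0")
    case False
    have "1 / (real N + 1) ^ 2 \<le> 1 / (real N * (real N + 1))"
      using False by (intro divide_left_mono) (auto simp: power2_eq_square)
    also have "\<dots> = 1 / real N - 1 / (real N + 1)"
      using False by (simp add: field_simps)
    finally show ?thesis using Suc False by (simp add: add.commute)
  qed simp
qed simp

lemma sum_inverse_powers_le:
  assumes "k \<ge> 2" shows "(\<Sum>j=1..N. 1 / real j ^ k) \<le> 2"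
proof -
  have "(\<Sum>j=1..N. 1 / real j ^ k) \<le> (\<Sum>j=1..N. 1 / real j ^ 2)"
    using assms by (intro sum_mono divide_left_mono power_increasing) auto
  also have "\<dots> \<le> 2"
    using sum_inverse_squares_le[of N] by (simp add: order_trans)
  finally show ?thesis .
qed

lemma mzv_trunc_le:
  assumes "\<forall>k\<in>set ks. k \<ge> 2" shows "mzv_trunc N ks \<le> 2 ^ length ks"
  using assms
proof (induction ks arbitrary: N)
  case (Cons k ks)
  have "mzv_trunc N (k # ks) \<le> (\<Sum>j=1..N. 1 / real j ^ k * 2 ^ length ks)"
    unfolding mzv_trunc.simps using Cons by (intro sum_mono mult_left_mono) auto
  also have "\<dots> \<le> 2 * 2 ^ length ks"
    unfolding sum_distrib_right[symmetric] using Cons.prems sum_inverse_powers_le[of k N]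
    by (intro mult_right_mono) auto
  finally show ?case by simp
qed simp

definition decr_tuples :: "nat \<Rightarrow> nat \<Rightarrow> nat list set" where
  "decr_tuples r N = {ms. length ms = r \<and> sorted_wrt (>) ms \<and> (\<forall>x\<in>set ms. 0 < x \<and> x \<le> N)}"

definition mzv_term :: "nat list \<Rightarrow> nat list \<Rightarrow> real" where
  "mzv_term ks ms = (\<Prod>j<length ks. 1 / real (ms ! j) ^ (ks ! j))"

lemma decr_tuples_0: "decr_tuples 0 N = {[]}"
  by (auto simp: decr_tuples_def)

lemma decr_tuples_Suc:
  "decr_tuples (Suc r) N = (\<lambda>(j, ms). j # ms) ` (SIGMA j:{1..N}. decr_tuples r (j - 1))"
proof safe
  fix ms assume ms: "ms \<in> decr_tuples (Suc r) N"
  then obtain j ms' where "ms = j # ms'" unfolding decr_tuples_def by (cases ms) auto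
  with ms show "ms \<in> (\<lambda>(j, ms). j # ms) ` (SIGMA j:{1..N}. decr_tuples r (j - 1))"
    by (force simp: decr_tuples_def)
qed (auto simp: decr_tuples_def)

lemma finite_decr_tuples: "finite (decr_tuples r N)"
  by (induction r arbitrary: N) (auto simp: decr_tuples_0 decr_tuples_Suc)

lemma mzv_term_nonneg: "mzv_term ks ms \<ge> 0"
  by (auto simp: mzv_term_def intro!: prod_nonneg)

lemma sum_decr_tuples_mzv_term:
  "(\<Sum>ms\<in>decr_tuples (length ks) N. mzv_term ks ms) = mzv_trunc N ks"
proof (induction ks arbitrary: N)
  case Nil
  show ?case by (simp add: decr_tuples_0 mzv_term_def)
next
  case (Cons k ks)
  have inj: "inj_on (\<lambda>(j, ms). j # ms) (SIGMA j:{1..N}. decr_tuples (length ks) (j - 1))"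
    by (auto simp: inj_on_def)
  have "(\<Sum>ms\<in>decr_tuples (length (k # ks)) N. mzv_term (k # ks) ms)
      = (\<Sum>j=1..N. \<Sum>ms\<in>decr_tuples (length ks) (j - 1). mzv_term (k # ks) (j # ms))"
    unfolding decr_tuples_Suc length_Cons
    by (subst sum.reindex[OF inj], subst sum.Sigma) (auto simp: finite_decr_tuples case_prod_unfold)
  also have "\<dots> = (\<Sum>j=1..N. \<Sum>ms\<in>decr_tuples (length ks) (j - 1). 1 / real j ^ k * mzv_term ks ms)"
    by (simp add: mzv_term_def prod.lessThan_Suc_shift del: prod.lessThan_Suc)
  also have "\<dots> = mzv_trunc N (k # ks)"
    by (simp only: mzv_trunc.simps sum_distrib_left[symmetric] Cons.IH)
  finally show ?case .
qed

lemma decr_tuples_cofinal: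
  assumes "finite X" "X \<subseteq> {ms. length ms = r \<and> sorted_wrt (>) ms \<and> (\<forall>x\<in>set ms. x > 0)}"
  shows "\<exists>N0. \<forall>N\<ge>N0. X \<subseteq> decr_tuples r N"
proof -
  have "finite (\<Union>ms\<in>X. set ms)" using assms(1) by simp
  from finite_nat_set_iff_bounded_le[THEN iffD1, OF this]
  obtain N0 where N0: "\<And>ms x. ms \<in> X \<Longrightarrow> x \<in> set ms \<Longrightarrow> x \<le> N0"
    by auto
  have "ms \<in> decr_tuples r N" if "N \<ge> N0" "ms \<in> X" for N ms
    using assms(2) N0[OF \<open>ms \<in> X\<close>] that unfolding decr_tuples_def
    by (auto intro: order_trans)
  then show ?thesis by blast
qed

lemma filterlim_decr_tuples:
  "filterlim (decr_tuples r)
     (finite_subsets_at_top {ms. length ms = r \<and> sorted_wrt (>) ms \<and> (\<forall>x\<in>set ms. x > 0)}) sequentially"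
  unfolding filterlim_finite_subsets_at_top
proof (intro allI impI)
  fix X :: "nat list set"
  assume "finite X \<and> X \<subseteq> {ms. length ms = r \<and> sorted_wrt (>) ms \<and> (\<forall>x\<in>set ms. x > 0)}"
  then obtain N0 where "\<forall>N\<ge>N0. X \<subseteq> decr_tuples r N"
    using decr_tuples_cofinal[of X r] by blast
  moreover have "decr_tuples r N \<subseteq> {ms. length ms = r \<and> sorted_wrt (>) ms \<and> (\<forall>x\<in>set ms. x > 0)}" for N
    by (auto simp: decr_tuples_def)
  ultimately show "\<forall>\<^sub>F N in sequentially. finite (decr_tuples r N) \<and> X \<subseteq> decr_tuples r N
      \<and> decr_tuples r N \<subseteq> {ms. length ms = r \<and> sorted_wrt (>) ms \<and> (\<forall>x\<in>set ms. x > 0)}"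
    unfolding eventually_sequentially using finite_decr_tuples by blast
qed

lemma mzv_trunc_tendsto:
  assumes "\<forall>k\<in>set ks. k \<ge> 2"
  shows "(\<lambda>N. mzv_trunc N ks) \<longlonglongrightarrow> mzv ks"
proof -
  define A :: "nat list set"
    where "A = {ms. length ms = length ks \<and> sorted_wrt (>) ms \<and> (\<forall>x\<in>set ms. x > 0)}"
  have "mzv_term ks summable_on A"
  proof (rule nonneg_bdd_above_summable_on)
    show "bdd_above (sum (mzv_term ks) ` {F. F \<subseteq> A \<and> finite F})"
    proof (rule bdd_aboveI2)
      fix F assume "F \<in> {F. F \<subseteq> A \<and> finite F}"
      then have "finite F" "F \<subseteq> A" by auto
      then obtain N where "\<forall>N'\<ge>N. F \<subseteq> decr_tuples (length ks) N'"
        using decr_tuples_cofinal[of F "length ks"] unfolding A_def by blast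
      then have "F \<subseteq> decr_tuples (length ks) N" by blast
      then have "sum (mzv_term ks) F \<le> sum (mzv_term ks) (decr_tuples (length ks) N)"
        by (intro sum_mono2 finite_decr_tuples mzv_term_nonneg)
      also have "\<dots> = mzv_trunc N ks" by (rule sum_decr_tuples_mzv_term)
      also have "\<dots> \<le> 2 ^ length ks" using assms by (rule mzv_trunc_le)
      finally show "sum (mzv_term ks) F \<le> 2 ^ length ks" .
    qed
  qed (rule mzv_term_nonneg)
  moreover have "mzv ks = infsum (mzv_term ks) A"
    unfolding mzv_def A_def mzv_term_def ..
  ultimately have "(sum (mzv_term ks) \<longlongrightarrow> mzv ks) (finite_subsets_at_top A)"
    unfolding has_sum_def[symmetric] by simp
  from filterlim_compose[OF this filterlim_decr_tuples[of "length ks", folded A_def]] show ?thesis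
    by (simp add: sum_decr_tuples_mzv_term)
qed

lemma mzv_Nil: "mzv [] = 1"
  using LIMSEQ_unique[OF mzv_trunc_tendsto[of "[]"]] by simp

section \<open>Compositions and the merge operator\<close>

definition compositions :: "nat \<Rightarrow> nat \<Rightarrow> nat list set" where
  "compositions k r = {ks. length ks = r \<and> (\<forall>x\<in>set ks. x \<ge> 1) \<and> sum_list ks = k}"

lemma compositions_0: "compositions k 0 = (if k = 0 then {[]} else {})"
  by (auto simp: compositions_def)

lemma compositions_Suc:
  "compositions k (Suc r) = (\<lambda>(a, q). a # q) ` (SIGMA a:{1..k}. compositions (k - a) r)"
proof safe
  fix ks assume ks: "ks \<in> compositions k (Suc r)"
  then obtain a q where "ks = a # q" unfolding compositions_def by (cases ks) auto
  with ks show "ks \<in> (\<lambda>(a, q). a # q) ` (SIGMA a:{1..k}. compositions (k - a) r)"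
    by (force simp: compositions_def)
qed (auto simp: compositions_def)

lemma finite_compositions: "finite (compositions k r)"
  by (induction r arbitrary: k) (auto simp: compositions_0 compositions_Suc)

lemma compositions_eq_empty: "k < r \<Longrightarrow> compositions k r = {}"
  by (induction r arbitrary: k) (auto simp: compositions_Suc)

lemma sum_compositions_Suc:
  "(\<Sum>p\<in>compositions k (Suc r). f p) = (\<Sum>a=1..k. \<Sum>q\<in>compositions (k - a) r. f (a # q))"
proof -
  have inj: "inj_on (\<lambda>(a, q). a # q) (SIGMA a:{1..k}. compositions (k - a) r)"
    by (auto simp: inj_on_def)
  show ?thesis
    unfolding compositions_Suc
    by (subst sum.reindex[OF inj], subst sum.Sigma) (auto simp: finite_compositions case_prod_unfold)
qed

lemma sum_compositions_merge_head:
  "(\<Sum>q\<in>compositions j (Suc s). f ((a + hd q) # tl q))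
     = (\<Sum>b=a+1..a+j. \<Sum>q\<in>compositions (a + j - b) s. f (b # q))"
proof -
  have "(\<Sum>q\<in>compositions j (Suc s). f ((a + hd q) # tl q))
      = (\<Sum>c=1..j. \<Sum>q\<in>compositions (j - c) s. f ((a + c) # q))"
    by (simp add: sum_compositions_Suc)
  also have "\<dots> = (\<Sum>b=a+1..a+j. \<Sum>q\<in>compositions (a + j - b) s. f (b # q))"
    using sum.shift_bounds_cl_nat_ivl[of "\<lambda>b. \<Sum>q\<in>compositions (a + j - b) s. f (b # q)" 1 a j]
    by (simp add: add.commute)
  finally show ?thesis .
qed

lemma merges_Cons:
  "rest \<noteq> [] \<Longrightarrow> merges (a # rest) =
     map (\<lambda>l. a # l) (merges rest) @ map (\<lambda>l. (a + hd l) # tl l) (merges rest)"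
  by (cases rest) auto

lemma merges_nonempty: "xs \<noteq> [] \<Longrightarrow> l \<in> set (merges xs) \<Longrightarrow> l \<noteq> []"
  by (induction xs arbitrary: l rule: merges.induct) auto

lemma merges_map:
  assumes "\<And>a b. f (a + b) = f a + f b"
  shows "merges (map f xs) = map (map f) (merges xs)"
proof (induction xs rule: merges.induct)
  case (3 a b rest)
  have "l \<in> set (merges (b # rest)) \<Longrightarrow> l \<noteq> []" for l by (rule merges_nonempty) auto
  then have "map (\<lambda>l. (f a + hd l) # tl l) (map (map f) (merges (b # rest)))
      = map (map f) (map (\<lambda>l. (a + hd l) # tl l) (merges (b # rest)))"
    by (auto simp: assms hd_map map_tl)
  with 3 show ?case by simp
qed auto

lemma sum_choose_hockey_stick:
  "c \<le> M \<Longrightarrow> (\<Sum>a=1..c. ((M - a) choose u)) + ((M - c) choose Suc u) = M choose Suc u"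
proof (induction c)
  case (Suc c)
  then have "M - c = Suc (M - Suc c)" by auto
  with Suc show ?case by simp
qed simp

lemma sum_triangle_swap:
  fixes k :: nat
  shows "(\<Sum>a=1..k. \<Sum>b=a+1..k. h a b) = (\<Sum>b=1..k. \<Sum>a=1..b-1. h a b :: 'a :: comm_monoid_add)"
  by (induction k) (simp_all add: sum.distrib)

lemma choose_Suc_mult_sum_compositions_0:
  "of_nat (k choose Suc n) * (\<Sum>p\<in>compositions k 0. f p) = (0 :: 'a :: semiring_1)"
  by (simp add: compositions_0)

lemma sum_merges_Cons_compositions:
  assumes "n \<ge> 1"
  shows "(\<Sum>ks\<in>compositions k (Suc n). sum_list (map \<psi> (merges ks)))
       = (\<Sum>a=1..k. \<Sum>q\<in>compositions (k - a) n.
            sum_list (map (\<lambda>p. \<psi> (a # p) + \<psi> ((a + hd p) # tl p)) (merges q)))"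
  unfolding sum_compositions_Suc
proof (intro sum.cong refl)
  fix a q assume "q \<in> compositions (k - a) n"
  with assms have "q \<noteq> []" by (auto simp: compositions_def)
  then show "sum_list (map \<psi> (merges (a # q)))
      = sum_list (map (\<lambda>p. \<psi> (a # p) + \<psi> ((a + hd p) # tl p)) (merges q))"
    by (simp add: merges_Cons sum_list_addf o_def)
qed

lemma choose_merge_coefficient:
  assumes "1 \<le> b" "b + s \<le> k" "s < n"
  shows "((k - b - s) choose (n - s)) + (\<Sum>a=1..b-1. (k - a - Suc s) choose (n - Suc s))
       = (k - Suc s) choose (n - s)"
proof -
  have "(\<Sum>a=1..b-1. ((k - Suc s - a) choose (n - Suc s)))
      + ((k - Suc s - (b - 1)) choose Suc (n - Suc s)) = (k - Suc s) choose Suc (n - Suc s)"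
    using assms by (intro sum_choose_hockey_stick) auto
  moreover have "k - Suc s - (b - 1) = k - b - s" "Suc (n - Suc s) = n - s"
    using assms by auto
  ultimately show ?thesis
    by (simp add: add.commute)
qed

(* The coefficient comparison in the inductive step of sum_merges_compositions_atMost: W b s
   stands for the sum over the compositions of k into s + 1 parts with first part b. *)
lemma sum_merges_regroup:
  fixes W :: "nat \<Rightarrow> nat \<Rightarrow> 'a :: comm_semiring_1"
  assumes W0: "\<And>b s. b \<le> k \<Longrightarrow> k < b + s \<Longrightarrow> W b s = 0"
  shows "(\<Sum>a=1..k. (\<Sum>s\<le>n. of_nat ((k - a - s) choose (n - s)) * W a s)
            + (\<Sum>s<n. of_nat ((k - a - Suc s) choose (n - Suc s)) * (\<Sum>b=a+1..k. W b s)))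
       = (\<Sum>b=1..k. \<Sum>s\<le>n. of_nat ((k - Suc s) choose (n - s)) * W b s)"
proof -
  define c :: "nat \<Rightarrow> nat \<Rightarrow> 'a" where "c a s = of_nat ((k - a - Suc s) choose (n - Suc s))" for a s
  have coeff: "of_nat ((k - b - s) choose (n - s)) * W b s + (\<Sum>a=1..b-1. c a s) * W b s
      = of_nat ((k - Suc s) choose (n - s)) * W b s" if "b \<in> {1..k}" "s < n" for b s
  proof (cases "b + s \<le> k")
    case True
    with that choose_merge_coefficient[of b s k n] show ?thesis
      by (simp add: c_def flip: distrib_right of_nat_sum of_nat_add)
  qed (use that W0 in simp)
  have "(\<Sum>a=1..k. \<Sum>s<n. c a s * (\<Sum>b=a+1..k. W b s))
      = (\<Sum>s<n. \<Sum>a=1..k. \<Sum>b=a+1..k. c a s * W b s)"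
    unfolding sum_distrib_left by (rule sum.swap)
  also have "\<dots> = (\<Sum>s<n. \<Sum>b=1..k. \<Sum>a=1..b-1. c a s * W b s)"
    unfolding sum_triangle_swap ..
  also have "\<dots> = (\<Sum>b=1..k. \<Sum>s<n. (\<Sum>a=1..b-1. c a s) * W b s)"
    unfolding sum_distrib_right by (rule sum.swap)
  finally have swap: "(\<Sum>a=1..k. \<Sum>s<n. c a s * (\<Sum>b=a+1..k. W b s))
      = (\<Sum>b=1..k. \<Sum>s<n. (\<Sum>a=1..b-1. c a s) * W b s)" .
  have "(\<Sum>s\<le>n. of_nat ((k - b - s) choose (n - s)) * W b s) + (\<Sum>s<n. (\<Sum>a=1..b-1. c a s) * W b s)
      = (\<Sum>s\<le>n. of_nat ((k - Suc s) choose (n - s)) * W b s)" if "b \<in> {1..k}" for b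
  proof -
    have "(\<Sum>s\<le>n. of_nat ((k - b - s) choose (n - s)) * W b s) + (\<Sum>s<n. (\<Sum>a=1..b-1. c a s) * W b s)
        = (\<Sum>s<n. of_nat ((k - b - s) choose (n - s)) * W b s + (\<Sum>a=1..b-1. c a s) * W b s)
          + of_nat ((k - b - n) choose (n - n)) * W b n"
      by (simp only: lessThan_Suc_atMost[symmetric] sum.lessThan_Suc sum.distrib ac_simps)
    also have "\<dots> = (\<Sum>s<n. of_nat ((k - Suc s) choose (n - s)) * W b s)
          + of_nat ((k - Suc n) choose (n - n)) * W b n"
      using that by (intro arg_cong2[where f = "(+)"] sum.cong refl coeff) simp_all
    finally show ?thesis
      by (simp only: lessThan_Suc_atMost[symmetric] sum.lessThan_Suc)
  qed
  then show ?thesis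
    unfolding sum.distrib c_def[symmetric] swap by (simp only: sum.distrib[symmetric] cong: sum.cong)
qed

lemma sum_choose_weighted_merge_head:
  assumes "n \<ge> 1" "a \<le> k"
  shows "(\<Sum>s\<le>n. of_nat ((k - a - s) choose (n - s))
            * (\<Sum>q\<in>compositions (k - a) s. \<psi> ((a + hd q) # tl q)))
       = (\<Sum>s<n. of_nat ((k - a - Suc s) choose (n - Suc s))
            * (\<Sum>b=a+1..k. \<Sum>q\<in>compositions (k - b) s. \<psi> (b # q)))"
proof -
  obtain n' where "n = Suc n'" using assms by (cases n) auto
  then have "of_nat ((k - a) choose n) * (\<Sum>q\<in>compositions (k - a) 0. \<psi> ((a + hd q) # tl q)) = 0"
    by (rule ssubst) (rule choose_Suc_mult_sum_compositions_0)
  moreover have "(\<Sum>q\<in>compositions (k - a) (Suc s). \<psi> ((a + hd q) # tl q))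
      = (\<Sum>b=a+1..k. \<Sum>q\<in>compositions (k - b) s. \<psi> (b # q))" for s
    using assms by (simp add: sum_compositions_merge_head)
  ultimately show ?thesis by (simp add: sum.atMost_shift)
qed

lemma sum_merges_compositions_atMost:
  fixes \<psi> :: "nat list \<Rightarrow> 'a :: comm_ring_1"
  assumes "n \<ge> 1"
  shows "(\<Sum>ks\<in>compositions k n. sum_list (map \<psi> (merges ks)))
       = (\<Sum>r\<le>n. of_nat ((k - r) choose (n - r)) * (\<Sum>p\<in>compositions k r. \<psi> p))"
  using assms
proof (induction n arbitrary: k \<psi> rule: nat_induct_at_least)
  case base
  have "merges p = [p]" if "p \<in> compositions k 1" for p
    using that by (auto simp: compositions_def length_Suc_conv)
  then show ?case
    by (simp add: compositions_0)
next
  case (Suc n)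
  define W where "W b s = (\<Sum>q\<in>compositions (k - b) s. \<psi> (b # q))" for b s
  have W0: "W b s = 0" if "b \<le> k" "k < b + s" for b s
  proof -
    from that have "k - b < s" by linarith
    then show ?thesis by (simp add: W_def compositions_eq_empty)
  qed
  define V where "V a s = (\<Sum>q\<in>compositions (k - a) s. \<psi> ((a + hd q) # tl q))" for a s
  have V: "(\<Sum>s\<le>n. of_nat ((k - a - s) choose (n - s)) * V a s)
      = (\<Sum>s<n. of_nat ((k - a - Suc s) choose (n - Suc s)) * (\<Sum>b=a+1..k. W b s))" if "a \<le> k" for a
    unfolding V_def W_def using Suc.hyps that by (rule sum_choose_weighted_merge_head)
  have "(\<Sum>ks\<in>compositions k (Suc n). sum_list (map \<psi> (merges ks)))
      = (\<Sum>a=1..k. \<Sum>s\<le>n. of_nat ((k - a - s) choose (n - s)) * (W a s + V a s))"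
    by (simp add: sum_merges_Cons_compositions[OF Suc.hyps] Suc.IH W_def V_def sum.distrib)
  also have "\<dots> = (\<Sum>a=1..k. (\<Sum>s\<le>n. of_nat ((k - a - s) choose (n - s)) * W a s)
      + (\<Sum>s<n. of_nat ((k - a - Suc s) choose (n - Suc s)) * (\<Sum>b=a+1..k. W b s)))"
  proof (intro sum.cong refl)
    fix a assume "a \<in> {1..k}"
    then show "(\<Sum>s\<le>n. of_nat ((k - a - s) choose (n - s)) * (W a s + V a s))
        = (\<Sum>s\<le>n. of_nat ((k - a - s) choose (n - s)) * W a s)
          + (\<Sum>s<n. of_nat ((k - a - Suc s) choose (n - Suc s)) * (\<Sum>b=a+1..k. W b s))"
      by (simp only: distrib_left sum.distrib V atLeastAtMost_iff)
  qed
  also have "\<dots> = (\<Sum>b=1..k. \<Sum>s\<le>n. of_nat ((k - Suc s) choose (n - s)) * W b s)"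
    using W0 by (rule sum_merges_regroup)
  also have "\<dots> = (\<Sum>s\<le>n. of_nat ((k - Suc s) choose (n - s)) * (\<Sum>b=1..k. W b s))"
    unfolding sum_distrib_left by (rule sum.swap)
  also have "\<dots> = (\<Sum>s\<le>n. of_nat ((k - Suc s) choose (Suc n - Suc s))
      * (\<Sum>p\<in>compositions k (Suc s). \<psi> p))"
    by (simp only: W_def sum_compositions_Suc diff_Suc_Suc)
  also have "\<dots> = (\<Sum>r\<le>Suc n. of_nat ((k - r) choose (Suc n - r)) * (\<Sum>p\<in>compositions k r. \<psi> p))"
    by (simp only: sum.atMost_Suc_shift diff_zero choose_Suc_mult_sum_compositions_0 add_0_left)
  finally show ?case .
qed

lemma sum_merges_compositions:
  fixes \<psi> :: "nat list \<Rightarrow> 'a :: comm_ring_1"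
  assumes "n \<ge> 1"
  shows "(\<Sum>ks\<in>compositions k n. sum_list (map \<psi> (merges ks)))
       = (\<Sum>r=1..n. of_nat ((k - r) choose (n - r)) * (\<Sum>p\<in>compositions k r. \<psi> p))"
proof -
  obtain n' where n': "n = Suc n'" using assms by (cases n) auto
  have "{..n} = insert 0 {1..n}" by auto
  with choose_Suc_mult_sum_compositions_0[of k n' \<psi>] show ?thesis
    unfolding sum_merges_compositions_atMost[OF assms] by (simp add: n')
qed

section \<open>Generating functions\<close>

definition mzv_trunc_fps :: "nat \<Rightarrow> nat \<Rightarrow> complex fps" where
  "mzv_trunc_fps e N = (\<Prod>j=1..N. 1 - fps_const (of_real (1 / real j ^ e)) * fps_X)"

(* The coefficient of y^r in A((1 - y) X). *)
definition fps_choose_weight :: "nat \<Rightarrow> 'a :: comm_ring_1 fps \<Rightarrow> 'a fps" where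
  "fps_choose_weight r A = Abs_fps (\<lambda>l. (-1) ^ r * of_nat (l choose r) * A $ l)"

lemma one_minus_const_X_mult_nth:
  fixes c :: "'a :: comm_ring_1"
  shows "((1 - fps_const c * fps_X) * A) $ l = A $ l - (if l = 0 then 0 else c * A $ (l - 1))"
proof -
  have "(1 - fps_const c * fps_X) * A = A - fps_const c * (fps_X * A)"
    by (simp add: algebra_simps)
  then show ?thesis by (simp add: fps_X_mult_nth)
qed

lemma mzv_trunc_fps_Suc:
  "mzv_trunc_fps e (Suc N)
     = (1 - fps_const (of_real (1 / real (Suc N) ^ e)) * fps_X) * mzv_trunc_fps e N"
  by (simp add: mzv_trunc_fps_def mult.commute)

lemma fps_nth_mzv_trunc_fps:
  "mzv_trunc_fps e N $ l = (-1) ^ l * of_real (mzv_trunc N (replicate l e))"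
proof (induction N arbitrary: l)
  case 0
  then show ?case by (cases l) (auto simp: mzv_trunc_fps_def)
next
  case (Suc N)
  then show ?case
    by (cases l) (simp_all add: mzv_trunc_fps_Suc one_minus_const_X_mult_nth mzv_trunc_Suc_Cons
        algebra_simps)
qed

lemma eval_fps_mzv_trunc_fps:
  "eval_fps (mzv_trunc_fps e N) w = (\<Prod>j=1..N. 1 - w / of_nat j ^ e)"
proof -
  have "mzv_trunc_fps e N = fps_of_poly (\<Prod>j=1..N. [:1, - of_real (1 / real j ^ e):])"
    by (simp add: mzv_trunc_fps_def fps_of_poly_prod fps_of_poly_pCons mult.commute
        flip: fps_const_neg)
  then show ?thesis
    by (simp add: poly_prod field_simps)
qed

lemma fps_choose_weight_0 [simp]: "fps_choose_weight 0 A = A"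
  by (simp add: fps_choose_weight_def fps_eq_iff)

lemma fps_choose_weight_one_minus_const_X_mult:
  "fps_choose_weight (Suc r) ((1 - fps_const c * fps_X) * A)
     = (1 - fps_const c * fps_X) * fps_choose_weight (Suc r) A
       + fps_const c * fps_X * fps_choose_weight r A"
proof (rule fps_ext)
  fix l
  show "fps_choose_weight (Suc r) ((1 - fps_const c * fps_X) * A) $ l
      = ((1 - fps_const c * fps_X) * fps_choose_weight (Suc r) A
         + fps_const c * fps_X * fps_choose_weight r A) $ l"
  proof (cases l)
    case (Suc l')
    have "fps_const c * fps_X * fps_choose_weight r A = fps_const c * (fps_X * fps_choose_weight r A)"
      by (simp add: mult.assoc)
    then show ?thesis
      by (simp add: Suc fps_choose_weight_def one_minus_const_X_mult_nth fps_X_mult_nth)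
        (simp add: algebra_simps)
  qed (simp add: fps_choose_weight_def one_minus_const_X_mult_nth)
qed

lemma geometric_fps_mult_one_minus_const_X:
  fixes c :: "'a :: comm_ring_1"
  shows "(1 - fps_const c * fps_X) * Abs_fps (\<lambda>a. if a = 0 then 0 else c ^ a) = fps_const c * fps_X"
proof (rule fps_ext)
  fix l
  show "((1 - fps_const c * fps_X) * Abs_fps (\<lambda>a. if a = 0 then 0 else c ^ a)) $ l
      = (fps_const c * fps_X) $ l"
    by (cases l) (auto simp: one_minus_const_X_mult_nth power_Suc[symmetric] simp del: power_Suc)
qed

definition compositions_mzv_trunc :: "nat \<Rightarrow> nat \<Rightarrow> nat \<Rightarrow> nat \<Rightarrow> real" where
  "compositions_mzv_trunc e N k r = (\<Sum>a\<in>compositions k r. mzv_trunc N (map (\<lambda>x. e * x) a))"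

lemma compositions_mzv_trunc_Suc:
  "compositions_mzv_trunc e (Suc N) k (Suc r) = compositions_mzv_trunc e N k (Suc r)
     + (\<Sum>a=1..k. (1 / real (Suc N) ^ e) ^ a * compositions_mzv_trunc e N (k - a) r)"
  by (simp add: compositions_mzv_trunc_def sum_compositions_Suc mzv_trunc_Suc_Cons
      power_mult power_divide sum.distrib sum_distrib_left)

definition compositions_mzv_trunc_fps :: "nat \<Rightarrow> nat \<Rightarrow> nat \<Rightarrow> complex fps" where
  "compositions_mzv_trunc_fps e N r = Abs_fps (\<lambda>k. of_real (compositions_mzv_trunc e N k r))"

lemma compositions_mzv_trunc_fps_0: "compositions_mzv_trunc_fps e N 0 = 1"
  by (simp add: compositions_mzv_trunc_fps_def compositions_mzv_trunc_def compositions_0 fps_eq_iff)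

lemma compositions_mzv_trunc_fps_Suc:
  "compositions_mzv_trunc_fps e (Suc N) (Suc r) = compositions_mzv_trunc_fps e N (Suc r)
     + Abs_fps (\<lambda>a. if a = 0 then 0 else of_real (1 / real (Suc N) ^ e) ^ a)
       * compositions_mzv_trunc_fps e N r"
proof (rule fps_ext)
  fix k
  have "(\<Sum>i=0..k. (if i = 0 then 0 else of_real (1 / real (Suc N) ^ e) ^ i)
          * complex_of_real (compositions_mzv_trunc e N (k - i) r))
      = of_real (\<Sum>a=1..k. (1 / real (Suc N) ^ e) ^ a * compositions_mzv_trunc e N (k - a) r)"
    by (simp add: sum.atLeast_Suc_atMost[of 0 k] atLeastSucAtMost_greaterThanAtMost)
  then show "compositions_mzv_trunc_fps e (Suc N) (Suc r) $ k
      = (compositions_mzv_trunc_fps e N (Suc r)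
         + Abs_fps (\<lambda>a. if a = 0 then 0 else of_real (1 / real (Suc N) ^ e) ^ a)
           * compositions_mzv_trunc_fps e N r) $ k"
    by (simp add: compositions_mzv_trunc_fps_def compositions_mzv_trunc_Suc fps_mult_nth)
qed

lemma mzv_trunc_fps_mult_compositions:
  "mzv_trunc_fps e N * compositions_mzv_trunc_fps e N r
     = fps_choose_weight r (mzv_trunc_fps e N)"
proof (induction N arbitrary: r)
  case 0
  show ?case
    by (cases r) (auto simp: fps_eq_iff compositions_mzv_trunc_fps_def fps_choose_weight_def
        compositions_mzv_trunc_def compositions_0 sum_compositions_Suc mzv_trunc_fps_def)
next
  case (Suc N)
  define c where "c = complex_of_real (1 / real (Suc N) ^ e)"
  define G where "G = Abs_fps (\<lambda>a. if a = 0 then 0 else c ^ a)"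
  show ?case
  proof (cases r)
    case 0
    then show ?thesis by (simp add: compositions_mzv_trunc_fps_0)
  next
    case (Suc r')
    have U: "compositions_mzv_trunc_fps e (Suc N) r
        = compositions_mzv_trunc_fps e N (Suc r') + G * compositions_mzv_trunc_fps e N r'"
      unfolding Suc G_def c_def by (rule compositions_mzv_trunc_fps_Suc)
    have F: "mzv_trunc_fps e (Suc N) = (1 - fps_const c * fps_X) * mzv_trunc_fps e N"
      unfolding c_def by (rule mzv_trunc_fps_Suc)
    have "mzv_trunc_fps e (Suc N) * compositions_mzv_trunc_fps e (Suc N) r
        = (1 - fps_const c * fps_X) * (mzv_trunc_fps e N * compositions_mzv_trunc_fps e N (Suc r'))
          + ((1 - fps_const c * fps_X) * G) * (mzv_trunc_fps e N * compositions_mzv_trunc_fps e N r')"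
      unfolding U F by (simp add: algebra_simps)
    also have "\<dots> = fps_choose_weight r (mzv_trunc_fps e (Suc N))"
      unfolding Suc.IH G_def geometric_fps_mult_one_minus_const_X F Suc
      by (simp add: fps_choose_weight_one_minus_const_X_mult)
    finally show ?thesis .
  qed
qed

lemma tendsto_fps_nth_mult:
  fixes A B :: "nat \<Rightarrow> 'a :: real_normed_field fps"
  assumes "\<And>l. (\<lambda>N. A N $ l) \<longlonglongrightarrow> A' $ l" and "\<And>l. (\<lambda>N. B N $ l) \<longlonglongrightarrow> B' $ l"
  shows "(\<lambda>N. (A N * B N) $ n) \<longlonglongrightarrow> (A' * B') $ n"
  unfolding fps_mult_nth by (intro tendsto_sum tendsto_mult assms)

lemma tendsto_fps_nth_prod:
  fixes A :: "nat \<Rightarrow> 'i \<Rightarrow> 'a :: real_normed_field fps"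
  assumes "finite I" and "\<And>i l. i \<in> I \<Longrightarrow> (\<lambda>N. A N i $ l) \<longlonglongrightarrow> B i $ l"
  shows "(\<lambda>N. (\<Prod>i\<in>I. A N i) $ n) \<longlonglongrightarrow> (\<Prod>i\<in>I. B i) $ n"
  using assms
proof (induction I arbitrary: n rule: finite_induct)
  case empty
  show ?case by simp
next
  case (insert i I)
  then show ?case by (simp add: tendsto_fps_nth_mult)
qed

definition mzv_replicate_fps :: "nat \<Rightarrow> complex fps" where
  "mzv_replicate_fps e = Abs_fps (\<lambda>l. (-1) ^ l * of_real (mzv (replicate l e)))"

lemma mzv_replicate_fps_nth_0 [simp]: "mzv_replicate_fps e $ 0 = 1"
  by (simp add: mzv_replicate_fps_def mzv_Nil)

lemma tendsto_mzv_trunc_fps: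
  assumes "e \<ge> 2"
  shows "(\<lambda>N. mzv_trunc_fps e N $ l) \<longlonglongrightarrow> mzv_replicate_fps e $ l"
  unfolding fps_nth_mzv_trunc_fps mzv_replicate_fps_def fps_nth_Abs_fps
  using assms by (intro tendsto_intros mzv_trunc_tendsto) simp

lemma mzv_replicate_fps_mult_compositions:
  assumes "e \<ge> 2"
  shows "mzv_replicate_fps e * Abs_fps (\<lambda>k. \<Sum>a\<in>compositions k r. of_real (mzv (map (\<lambda>x. e * x) a)))
       = fps_choose_weight r (mzv_replicate_fps e)"
proof (rule fps_ext)
  fix k
  have "(\<lambda>N. compositions_mzv_trunc_fps e N r $ l)
      \<longlonglongrightarrow> (\<Sum>a\<in>compositions l r. complex_of_real (mzv (map (\<lambda>x. e * x) a)))" for l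
    unfolding compositions_mzv_trunc_fps_def compositions_mzv_trunc_def fps_nth_Abs_fps of_real_sum
  proof (intro tendsto_sum tendsto_of_real mzv_trunc_tendsto ballI)
    fix a x assume "a \<in> compositions l r" "x \<in> set (map (\<lambda>x. e * x) a)"
    then obtain y where "y \<ge> 1" "x = e * y" by (auto simp: compositions_def)
    with assms show "x \<ge> 2" using mult_le_mono[of 2 e 1 y] by simp
  qed
  then have "(\<lambda>N. (mzv_trunc_fps e N * compositions_mzv_trunc_fps e N r) $ k)
      \<longlonglongrightarrow> (mzv_replicate_fps e * Abs_fps (\<lambda>k. \<Sum>a\<in>compositions k r. of_real (mzv (map (\<lambda>x. e * x) a)))) $ k"
    using assms by (intro tendsto_fps_nth_mult tendsto_mzv_trunc_fps) simp_all
  moreover have "(\<lambda>N. fps_choose_weight r (mzv_trunc_fps e N) $ k)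
      \<longlonglongrightarrow> fps_choose_weight r (mzv_replicate_fps e) $ k"
    unfolding fps_choose_weight_def fps_nth_Abs_fps
    using assms by (intro tendsto_intros tendsto_mzv_trunc_fps)
  ultimately show "(mzv_replicate_fps e * Abs_fps (\<lambda>k. \<Sum>a\<in>compositions k r. of_real (mzv (map (\<lambda>x. e * x) a)))) $ k
      = fps_choose_weight r (mzv_replicate_fps e) $ k"
    unfolding mzv_trunc_fps_mult_compositions by (rule LIMSEQ_unique)
qed

theorem sum_compositions_mzv:
  assumes "e \<ge> 2"
  shows "(\<Sum>a\<in>compositions k r. of_real (mzv (map (\<lambda>x. e * x) a)))
       = (\<Sum>j=0..k. inverse (mzv_replicate_fps e) $ j
            * ((-1) ^ r * of_nat ((k - j) choose r) * mzv_replicate_fps e $ (k - j)))"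
proof -
  let ?U = "Abs_fps (\<lambda>k. \<Sum>a\<in>compositions k r. complex_of_real (mzv (map (\<lambda>x. e * x) a)))"
  have "?U = inverse (mzv_replicate_fps e) * fps_choose_weight r (mzv_replicate_fps e)"
    by (simp add: mzv_replicate_fps_mult_compositions[OF assms, symmetric] mult.assoc[symmetric]
        inverse_mult_eq_1)
  then have "?U $ k = (inverse (mzv_replicate_fps e) * fps_choose_weight r (mzv_replicate_fps e)) $ k"
    by simp
  then show ?thesis
    by (simp add: fps_mult_nth fps_choose_weight_def)
qed

section \<open>The values zeta(2,...,2)\<close>

lemma mzv_replicate_fps_2_sums:
  fixes z :: complex
  assumes z: "norm z < 1/2" and z0: "z \<noteq> 0"
  shows "(\<lambda>l. mzv_replicate_fps 2 $ l * z ^ (2 * l)) sums (sin (of_real pi * z) / (of_real pi * z))"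
proof -
  define a where "a l N = mzv_trunc_fps 2 N $ l * z ^ (2 * l)" for l N
  define M where "M l = (2 * norm z ^ 2) ^ l" for l
  have "norm z ^ 2 < (1/2) ^ 2" using z by (intro power_strict_mono) auto
  then have summable_M: "summable M"
    unfolding M_def by (intro summable_geometric) (simp add: power_divide)
  have "norm (a l N) \<le> M l" for l N
  proof -
    have "norm (a l N) = mzv_trunc N (replicate l 2) * norm z ^ (2 * l)"
      by (simp add: a_def fps_nth_mzv_trunc_fps norm_mult norm_power mzv_trunc_nonneg)
    also have "\<dots> \<le> 2 ^ l * norm z ^ (2 * l)"
      using mzv_trunc_le[of "replicate l 2" N] by (intro mult_right_mono) auto
    finally show ?thesis by (simp add: M_def power_mult power_mult_distrib)
  qed
  then have bound: "eventually (\<lambda>(l, N). norm (a l N) \<le> M l) (at_top \<times>\<^sub>F sequentially)"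
    by (intro always_eventually) auto
  have lim: "(\<lambda>N. a l N) \<longlonglongrightarrow> mzv_replicate_fps 2 $ l * z ^ (2 * l)" for l
    unfolding a_def by (intro tendsto_intros tendsto_mzv_trunc_fps) simp
  have "(\<Sum>l. a l N) = (\<Prod>j=1..N. 1 - z\<^sup>2 / of_nat j ^ 2)" for N
    using eval_fps_mzv_trunc_fps[of 2 N "z\<^sup>2"] by (simp add: a_def eval_fps_def power_mult)
  then have "(\<lambda>N. \<Sum>l. a l N) \<longlonglongrightarrow> sin (of_real pi * z) / (of_real pi * z)"
    using tendsto_divide[OF sin_product_formula_complex[of z] tendsto_const[of "of_real pi * z"]] z0
    by simp
  with tannerys_theorem[OF lim bound summable_M] show ?thesis
    by (metis LIMSEQ_unique summable_norm_cancel summable_sums trivial_limit_sequentially)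
qed

lemma sin_pi_sums_mzv_replicate_fps_2:
  fixes z :: complex
  assumes "norm z < 1/2"
  shows "(\<lambda>n. (if odd n then of_real pi * mzv_replicate_fps 2 $ (n div 2) else 0) * z ^ n)
           sums sin (of_real pi * z)"
    (is "?f sums _")
proof (cases "z = 0")
  case True
  have "?f sums (\<Sum>n\<in>{0}. ?f n)"
    by (rule sums_finite) (use True in auto)
  with True show ?thesis by simp
next
  case False
  have "(\<lambda>l. (of_real pi * z) * (mzv_replicate_fps 2 $ l * z ^ (2 * l)))
      sums ((of_real pi * z) * (sin (of_real pi * z) / (of_real pi * z)))"
    by (intro sums_mult mzv_replicate_fps_2_sums assms False)
  moreover have "(\<lambda>l. (of_real pi * z) * (mzv_replicate_fps 2 $ l * z ^ (2 * l))) = (\<lambda>l. ?f (2 * l + 1))"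
    by (simp add: algebra_simps power_mult)
  ultimately have "(\<lambda>l. ?f (2 * l + 1)) sums sin (of_real pi * z)"
    using False by simp
  moreover have "strict_mono (\<lambda>l::nat. 2 * l + 1)"
    by (auto simp: strict_mono_def)
  moreover have "?f n = 0" if "n \<notin> range (\<lambda>l::nat. 2 * l + 1)" for n
    using that oddE by fastforce
  ultimately show ?thesis
    using sums_mono_reindex[of "\<lambda>l. 2 * l + 1" ?f] by simp
qed

lemma fps_sin_pi_eq:
  "fps_sin (of_real pi :: complex)
     = Abs_fps (\<lambda>n. if odd n then of_real pi * mzv_replicate_fps 2 $ (n div 2) else 0)"
    (is "_ = ?S")
proof (rule eval_fps_eqD)
  have "summable (\<lambda>n. ?S $ n * (1/4 :: complex) ^ n)"
    using sin_pi_sums_mzv_replicate_fps_2[of "1/4"] by (auto simp: sums_iff)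
  then have "norm (1/4 :: complex) \<le> fps_conv_radius ?S"
    unfolding fps_conv_radius_def by (rule conv_radius_geI)
  then show "fps_conv_radius ?S > 0"
    by (rule less_le_trans[rotated]) simp
  have "eventually (\<lambda>z::complex. z \<in> ball 0 (1/2)) (nhds 0)"
    by (intro eventually_nhds_in_open) auto
  then show "eventually (\<lambda>z. eval_fps (fps_sin (of_real pi)) z = eval_fps ?S z) (nhds 0)"
  proof eventually_elim
    case (elim z)
    then have "eval_fps ?S z = sin (of_real pi * z)"
      using sums_unique[OF sin_pi_sums_mzv_replicate_fps_2[of z]] by (simp add: eval_fps_def)
    then show ?case by simp
  qed
qed simp

lemma mzv_replicate_2: "mzv (replicate l 2) = pi ^ (2 * l) / fact (2 * l + 1)"
proof -
  have "fps_sin (complex_of_real pi) $ (2 * l + 1)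
      = of_real pi * (-1) ^ l * of_real (mzv (replicate l 2))"
    by (simp add: fps_sin_pi_eq mzv_replicate_fps_def)
  then have "of_real pi * (-1) ^ l * of_real (mzv (replicate l 2))
      = of_real pi * (-1) ^ l * complex_of_real (pi ^ (2 * l) / fact (2 * l + 1))"
    by (simp add: fps_sin_def power_add algebra_simps)
  then show ?thesis
    by (simp only: mult_cancel_left of_real_eq_iff) simp
qed

section \<open>The Bernoulli numbers and x / sinh x\<close>

definition bernoulli_fps :: "real fps" where
  "bernoulli_fps = fps_X / (fps_exp 1 - 1)"

lemma bernoulli_fps_nth: "bernoulli_fps $ n = bernoulli n / fact n"
  by (simp add: bernoulli_def bernoulli_fps_def)

lemma bernoulli_fps_mult_exp: "bernoulli_fps * (fps_exp 1 - 1) = fps_X"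
proof -
  have "subdegree (fps_exp 1 - 1 :: real fps) = 1"
    by (rule subdegreeI) auto
  moreover have "(fps_exp 1 - 1 :: real fps) $ 1 \<noteq> 0"
    by simp
  then have "(fps_exp 1 - 1 :: real fps) \<noteq> 0"
    by auto
  ultimately show ?thesis
    unfolding bernoulli_fps_def by (intro fps_times_divide_eq) simp_all
qed

lemma bernoulli_fps_double_mult_exp:
  "(bernoulli_fps oo (fps_const 2 * fps_X)) * (fps_exp 1 * fps_exp 1 - 1) = fps_const 2 * fps_X"
proof -
  have "fps_exp (1::real) oo (fps_const 2 * fps_X) = fps_exp 2"
    by (simp add: fps_compose_linear fps_eq_iff)
  also have "fps_exp (2::real) = fps_exp 1 * fps_exp 1"
    using fps_exp_add_mult[of "1::real" 1] by simp
  finally have "(fps_exp 1 - 1 :: real fps) oo (fps_const 2 * fps_X) = fps_exp 1 * fps_exp 1 - 1"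
    by (simp add: fps_compose_sub_distrib)
  then show ?thesis
    using arg_cong[OF bernoulli_fps_mult_exp, of "\<lambda>A. A oo (fps_const 2 * fps_X)"]
    by (simp add: fps_compose_mult_distrib)
qed

definition sinhc_fps :: "real fps" where
  "sinhc_fps = Abs_fps (\<lambda>n. if even n then 1 / fact (n + 1) else 0)"

lemma X_mult_sinhc_fps: "fps_const 2 * (fps_X * sinhc_fps) = fps_exp 1 - fps_exp (-1)"
proof (rule fps_ext)
  fix n
  show "(fps_const 2 * (fps_X * sinhc_fps)) $ n = (fps_exp 1 - fps_exp (-1)) $ n"
    by (cases n) (auto simp: sinhc_fps_def algebra_simps)
qed

lemma bernoulli_fps_diff_mult_sinhc_fps:
  "(fps_const 2 * bernoulli_fps - (bernoulli_fps oo (fps_const 2 * fps_X))) * sinhc_fps = 1"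
proof -
  let ?E = "fps_exp (1::real)"
  let ?T = "fps_const 2 * bernoulli_fps - (bernoulli_fps oo (fps_const 2 * fps_X))"
  have inv: "?E * fps_exp (-1) = 1"
    using fps_exp_add_mult[of "1::real" "-1"] by simp
  have "?T * (?E * ?E - 1) = fps_const 2 * (bernoulli_fps * (?E - 1)) * (?E + 1)
      - (bernoulli_fps oo (fps_const 2 * fps_X)) * (?E * ?E - 1)"
    by (simp add: algebra_simps)
  also have "\<dots> = fps_const 2 * fps_X * (?E + 1) - fps_const 2 * fps_X"
    by (simp only: bernoulli_fps_mult_exp bernoulli_fps_double_mult_exp)
  also have "\<dots> = fps_const 2 * fps_X * ?E"
    by (simp add: algebra_simps)
  finally have "?T * sinhc_fps * (?E * ?E - 1) = (fps_const 2 * (fps_X * sinhc_fps)) * ?E"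
    by (simp add: ac_simps)
  also have "\<dots> = (?E - fps_exp (-1)) * ?E"
    by (simp only: X_mult_sinhc_fps)
  also have "\<dots> = ?E * ?E - ?E * fps_exp (-1)"
    by (simp add: algebra_simps)
  also have "\<dots> = 1 * (?E * ?E - 1)"
    by (simp only: inv mult_1_left)
  finally show ?thesis
    by (rule mult_right_cancel[THEN iffD1, rotated]) (auto simp: fps_eq_iff intro!: exI[of _ 1])
qed

lemma sum_upto_even_reindex:
  fixes f :: "nat \<Rightarrow> 'a :: comm_monoid_add"
  assumes "\<And>a. a \<le> 2 * n \<Longrightarrow> odd a \<Longrightarrow> f a = 0"
  shows "(\<Sum>a=0..2 * n. f a) = (\<Sum>i=0..n. f (2 * i))"
proof -
  have "(\<Sum>a=0..2 * n. f a) = (\<Sum>a\<in>(\<lambda>i. 2 * i) ` {0..n}. f a)"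
  proof (intro sum.mono_neutral_right ballI)
    fix a assume a: "a \<in> {0..2 * n} - (\<lambda>i. 2 * i) ` {0..n}"
    then have "odd a" by (auto elim!: evenE)
    with a show "f a = 0" by (intro assms) auto
  qed auto
  also have "\<dots> = (\<Sum>i=0..n. f (2 * i))"
    by (subst sum.reindex) (auto simp: inj_on_def)
  finally show ?thesis .
qed

theorem real_beta2_fps_mult_inverse_fact_odd:
  "Abs_fps (\<lambda>n. beta2 n / fact (2 * n)) * Abs_fps (\<lambda>n. 1 / fact (2 * n + 1)) = 1"
proof (rule fps_ext)
  fix n
  let ?T = "fps_const 2 * bernoulli_fps - (bernoulli_fps oo (fps_const 2 * fps_X))"
  have T_even: "?T $ (2 * i) = beta2 i / fact (2 * i)" for i
  proof -
    have "?T $ (2 * i) = 2 * bernoulli_fps $ (2 * i) - 2 ^ (2 * i) * bernoulli_fps $ (2 * i)"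
      by (simp only: fps_sub_nth fps_mult_left_const_nth fps_compose_linear fps_nth_Abs_fps)
    also have "\<dots> = (2 - 4 ^ i) * bernoulli_fps $ (2 * i)"
      by (simp only: power_mult left_diff_distrib) simp
    finally show ?thesis
      by (simp add: bernoulli_fps_nth beta2_def)
  qed
  have "(?T * sinhc_fps) $ (2 * n) = (\<Sum>i=0..n. ?T $ (2 * i) * sinhc_fps $ (2 * n - 2 * i))"
    unfolding fps_mult_nth by (rule sum_upto_even_reindex) (auto simp: sinhc_fps_def)
  also have "\<dots> = (\<Sum>i=0..n. beta2 i / fact (2 * i) * (1 / fact (2 * (n - i) + 1)))"
    by (intro sum.cong refl) (simp only: T_even, simp add: sinhc_fps_def flip: diff_mult_distrib2)
  finally have "(?T * sinhc_fps) $ (2 * n)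
      = (Abs_fps (\<lambda>n. beta2 n / fact (2 * n)) * Abs_fps (\<lambda>n. 1 / fact (2 * n + 1))) $ n"
    by (simp add: fps_mult_nth)
  then show "(Abs_fps (\<lambda>n. beta2 n / fact (2 * n)) * Abs_fps (\<lambda>n. 1 / fact (2 * n + 1))) $ n
      = (1 :: real fps) $ n"
    by (simp add: bernoulli_fps_diff_mult_sinhc_fps)
qed

section \<open>Even arguments and roots of unity\<close>

definition root_unity :: "nat \<Rightarrow> complex" where
  "root_unity m = cis (2 * pi / real m)"

lemma exp_pi_div_squared: "m \<ge> 1 \<Longrightarrow> exp (of_real pi * \<i> / of_nat m) ^ 2 = root_unity m"
  by (simp add: root_unity_def cis_conv_exp field_simps flip: exp_of_nat_mult)

lemma prod_root_unity_poly:
  assumes m: "m \<ge> 1"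
  shows "(\<Prod>k<m. [:- (root_unity m ^ k), 1:]) = monom 1 m - (1 :: complex poly)"
proof -
  define P :: "complex poly" where "P = monom 1 m - 1"
  have "degree (monom (1::complex) m) = m" by (simp add: degree_monom_eq)
  then have "lead_coeff ((-1) + monom 1 m :: complex poly) = lead_coeff (monom (1::complex) m)"
    using m by (intro lead_coeff_add_le) auto
  moreover have "P = (-1) + monom 1 m" by (simp add: P_def)
  ultimately have lead: "lead_coeff P = 1" by (metis lead_coeff_monom)
  have "rsquarefree P"
    unfolding rsquarefree_roots
  proof (intro allI notI)
    fix a assume "poly P a = 0 \<and> poly (pderiv P) a = 0"
    then have "a ^ m = 1" and "of_nat m * a ^ (m - 1) = 0"
      by (auto simp: P_def pderiv_diff pderiv_monom poly_monom)
    moreover from \<open>a ^ m = 1\<close> m have "a \<noteq> 0" by (cases m) auto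
    ultimately show False using m by simp
  qed
  then have "(\<Prod>z\<in>{z. z ^ m = 1}. [:-z, 1:]) = P"
    using complex_poly_decompose_rsquarefree[of P] lead by (simp add: P_def poly_monom)
  moreover have "cis (2 * pi * real k / real m) = root_unity m ^ k" for k
    by (simp add: root_unity_def Complex.DeMoivre mult.commute)
  then have "bij_betw (\<lambda>k. root_unity m ^ k) {..<m} {z. z ^ m = 1}"
    using m Complex.bij_betw_roots_unity[of m] by simp
  ultimately show ?thesis
    unfolding P_def by (simp add: prod.reindex_bij_betw[symmetric])
qed

lemma prod_one_minus_root_unity:
  assumes m: "m \<ge> 1"
  shows "(\<Prod>k<m. 1 - root_unity m ^ k * x) = 1 - x ^ m"
proof (cases "x = 0")
  case True
  with m show ?thesis by (simp add: power_0_left)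
next
  case False
  have "(\<Prod>k<m. 1 - root_unity m ^ k * x) = (\<Prod>k<m. x * (1 / x - root_unity m ^ k))"
    using False by (intro prod.cong) (auto simp: field_simps)
  also have "\<dots> = x ^ m * (\<Prod>k<m. 1 / x - root_unity m ^ k)"
    by (simp add: prod.distrib)
  also have "(\<Prod>k<m. 1 / x - root_unity m ^ k) = (1 / x) ^ m - 1"
    using arg_cong[OF prod_root_unity_poly[OF m], of "\<lambda>p. poly p (1 / x)"]
    by (simp add: poly_prod poly_monom)
  also have "x ^ m * ((1 / x) ^ m - 1) = 1 - x ^ m"
    using False by (simp add: field_simps)
  finally show ?thesis .
qed

lemma prod_one_minus_root_unity_fps:
  assumes m: "m \<ge> 1"
  shows "(\<Prod>k<m. 1 - fps_const (root_unity m ^ k * d) * fps_X)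
       = 1 - fps_const (d ^ m) * fps_X ^ m"
proof -
  define P :: "complex poly" where "P = (\<Prod>k<m. [:1, - (root_unity m ^ k * d):])"
  have "poly P y = poly (1 - monom (d ^ m) m) y" for y
    using prod_one_minus_root_unity[OF m, of "d * y"]
    by (simp add: P_def poly_prod poly_monom algebra_simps)
  then have "poly P = poly (1 - monom (d ^ m) m)" ..
  then have "fps_of_poly P = fps_of_poly (1 - monom (d ^ m) m)"
    by (simp only: poly_eq_poly_eq_iff)
  then show ?thesis
    by (simp add: P_def fps_of_poly_prod fps_of_poly_pCons fps_of_poly_diff fps_of_poly_monom
        mult.commute flip: fps_const_neg)
qed

lemma fps_nth_compose_X_power:
  fixes A :: "'a :: comm_ring_1 fps"
  assumes m: "m \<ge> 1"
  shows "(A oo fps_X ^ m) $ n = (if m dvd n then A $ (n div m) else 0)"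
proof -
  have "(A oo fps_X ^ m) $ n = (\<Sum>i\<in>{0..n} \<inter> {i. n = m * i}. A $ i)"
    by (simp add: fps_compose_nth sum.inter_restrict if_distrib power_mult[symmetric] cong: if_cong)
  also have "{0..n} \<inter> {i. n = m * i} = (if m dvd n then {n div m} else {})"
    using m by auto
  finally show ?thesis by simp
qed

lemma fps_nth_prod_lessThan:
  fixes A :: "nat \<Rightarrow> 'a :: comm_ring_1 fps"
  assumes "m \<ge> 1"
  shows "(\<Prod>p<m. A p) $ n = (\<Sum>v\<in>natpermute n m. \<Prod>p<m. A p $ (v ! p))"
proof -
  obtain m' where "m = Suc m'" using assms by (cases m) auto
  then show ?thesis
    using fps_prod_nth[of A m' n] by (simp add: atLeast0AtMost lessThan_Suc_atMost)
qed

definition root_twisted_coeff :: "nat \<Rightarrow> complex fps \<Rightarrow> nat \<Rightarrow> complex" where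
  "root_twisted_coeff m A n = (\<Sum>v\<in>natpermute n m. \<Prod>p<m. root_unity m ^ (p * v ! p) * A $ (v ! p))"

lemma fps_nth_prod_compose_root_unity:
  assumes "m \<ge> 1"
  shows "(\<Prod>p<m. A oo (fps_const (c * root_unity m ^ p) * fps_X)) $ n
       = c ^ n * root_twisted_coeff m A n"
proof -
  have "(\<Prod>p<m. (c * root_unity m ^ p) ^ (v ! p) * A $ (v ! p))
      = c ^ n * (\<Prod>p<m. root_unity m ^ (p * v ! p) * A $ (v ! p))" if "v \<in> natpermute n m" for v
  proof -
    have "(\<Prod>p<m. c ^ (v ! p)) = c ^ n"
      using that unfolding natpermute_def
      by (auto simp: power_sum[symmetric] sum_list_sum_nth atLeast0LessThan)
    then show ?thesis
      by (simp add: power_mult_distrib power_mult prod.distrib mult.assoc)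
  qed
  then show ?thesis
    using assms by (simp add: fps_nth_prod_lessThan fps_compose_linear root_twisted_coeff_def
        sum_distrib_left)
qed

lemma fps_compose_linear_linear:
  fixes A :: "'a :: comm_ring_1 fps"
  shows "(A oo (fps_const a * fps_X)) oo (fps_const b * fps_X) = A oo (fps_const (a * b) * fps_X)"
  unfolding fps_compose_linear by (simp add: fps_eq_iff power_mult_distrib mult_ac)

lemma one_minus_const_X_compose:
  fixes B :: "complex fps"
  assumes "B $ 0 = 0"
  shows "(1 - fps_const c * fps_X) oo B = 1 - fps_const c * B"
  using assms by (simp add: fps_compose_sub_distrib fps_compose_mult_distrib)

lemma mzv_trunc_fps_compose_X_power:
  assumes m: "m \<ge> 1"
  shows "mzv_trunc_fps (e * m) N oo fps_X ^ m
       = (\<Prod>p<m. mzv_trunc_fps e N oo (fps_const (root_unity m ^ p) * fps_X))"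
proof -
  define d where "d j = complex_of_real (1 / real j ^ e)" for j :: nat
  have X0: "(fps_X ^ m :: complex fps) $ 0 = 0" using m by simp
  have "mzv_trunc_fps (e * m) N oo fps_X ^ m = (\<Prod>j=1..N. 1 - fps_const (d j ^ m) * fps_X ^ m)"
    unfolding mzv_trunc_fps_def fps_compose_prod_distrib[OF X0]
    by (intro prod.cong refl) (simp add: one_minus_const_X_compose[OF X0] d_def power_mult power_divide)
  also have "\<dots> = (\<Prod>j=1..N. \<Prod>p<m. 1 - fps_const (root_unity m ^ p * d j) * fps_X)"
    by (simp add: prod_one_minus_root_unity_fps[OF m])
  also have "\<dots> = (\<Prod>p<m. \<Prod>j=1..N. 1 - fps_const (root_unity m ^ p * d j) * fps_X)"
    by (rule prod.swap)
  also have "\<dots> = (\<Prod>p<m. mzv_trunc_fps e N oo (fps_const (root_unity m ^ p) * fps_X))"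
  proof (intro prod.cong refl)
    fix p
    have L0: "(fps_const (root_unity m ^ p) * fps_X :: complex fps) $ 0 = 0" by simp
    have "mzv_trunc_fps e N oo (fps_const (root_unity m ^ p) * fps_X)
        = (\<Prod>j=1..N. (1 - fps_const (d j) * fps_X) oo (fps_const (root_unity m ^ p) * fps_X))"
      unfolding mzv_trunc_fps_def d_def by (rule fps_compose_prod_distrib[OF L0])
    also have "\<dots> = (\<Prod>j=1..N. 1 - fps_const (root_unity m ^ p * d j) * fps_X)"
      by (intro prod.cong refl, subst one_minus_const_X_compose[OF L0]) (simp add: algebra_simps)
    finally show "(\<Prod>j=1..N. 1 - fps_const (root_unity m ^ p * d j) * fps_X)
        = mzv_trunc_fps e N oo (fps_const (root_unity m ^ p) * fps_X)" ..
  qed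
  finally show ?thesis .
qed

lemma mzv_replicate_fps_compose_X_power:
  assumes "e \<ge> 2" and m: "m \<ge> 1"
  shows "mzv_replicate_fps (e * m) oo fps_X ^ m
       = (\<Prod>p<m. mzv_replicate_fps e oo (fps_const (root_unity m ^ p) * fps_X))"
proof (rule fps_ext)
  fix n
  have "e * m \<ge> 2" using assms by (metis le_trans mult_le_mono2 mult_1_right)
  then have "(\<lambda>N. (mzv_trunc_fps (e * m) N oo fps_X ^ m) $ n) \<longlonglongrightarrow> (mzv_replicate_fps (e * m) oo fps_X ^ m) $ n"
    unfolding fps_nth_compose_X_power[OF m] by (auto intro: tendsto_mzv_trunc_fps)
  moreover have "(\<lambda>N. (\<Prod>p<m. mzv_trunc_fps e N oo (fps_const (root_unity m ^ p) * fps_X)) $ n)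
      \<longlonglongrightarrow> (\<Prod>p<m. mzv_replicate_fps e oo (fps_const (root_unity m ^ p) * fps_X)) $ n"
    using assms by (intro tendsto_fps_nth_prod) (auto simp: fps_compose_linear intro!: tendsto_intros tendsto_mzv_trunc_fps)
  ultimately show "(mzv_replicate_fps (e * m) oo fps_X ^ m) $ n
      = (\<Prod>p<m. mzv_replicate_fps e oo (fps_const (root_unity m ^ p) * fps_X)) $ n"
    unfolding mzv_trunc_fps_compose_X_power[OF m] by (rule LIMSEQ_unique)
qed

definition inverse_fact_odd_fps :: "complex fps" where
  "inverse_fact_odd_fps = Abs_fps (\<lambda>n. of_real (1 / fact (2 * n + 1)))"

definition beta2_fps :: "complex fps" where
  "beta2_fps = Abs_fps (\<lambda>n. of_real (beta2 n / fact (2 * n)))"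

lemma beta2_fps_mult_inverse_fact_odd_fps: "beta2_fps * inverse_fact_odd_fps = 1"
proof (rule fps_ext)
  fix n
  have "(beta2_fps * inverse_fact_odd_fps) $ n
      = of_real ((Abs_fps (\<lambda>n. beta2 n / fact (2 * n)) * Abs_fps (\<lambda>n. 1 / fact (2 * n + 1))) $ n)"
    by (simp add: beta2_fps_def inverse_fact_odd_fps_def fps_mult_nth)
  also have "\<dots> = of_real ((1 :: real fps) $ n)"
    by (simp only: real_beta2_fps_mult_inverse_fact_odd)
  finally show "(beta2_fps * inverse_fact_odd_fps) $ n = (1 :: complex fps) $ n"
    by simp
qed

lemma mzv_replicate_fps_2:
  "mzv_replicate_fps 2 = inverse_fact_odd_fps oo (fps_const (- (of_real pi)\<^sup>2) * fps_X)"
  by (simp add: fps_eq_iff fps_compose_linear mzv_replicate_fps_def inverse_fact_odd_fps_def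
      mzv_replicate_2 power_mult power_mult_distrib power_minus[of "of_real pi ^ 2"])

lemma mzv_replicate_fps_even_compose_X_power:
  assumes m: "m \<ge> 1"
  shows "mzv_replicate_fps (2 * m) oo fps_X ^ m
       = (\<Prod>p<m. inverse_fact_odd_fps oo (fps_const (- (of_real pi)\<^sup>2 * root_unity m ^ p) * fps_X))"
  using mzv_replicate_fps_compose_X_power[of 2 m] m by (simp add: mzv_replicate_fps_2 fps_compose_linear_linear)

lemma inverse_mzv_replicate_fps_even_compose_X_power:
  assumes m: "m \<ge> 1"
  shows "inverse (mzv_replicate_fps (2 * m)) oo fps_X ^ m
       = (\<Prod>p<m. beta2_fps oo (fps_const (- (of_real pi)\<^sup>2 * root_unity m ^ p) * fps_X))"
proof -
  let ?c = "\<lambda>p. fps_const (- (of_real pi)\<^sup>2 * root_unity m ^ p) * fps_X"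
  have "(\<Prod>p<m. inverse_fact_odd_fps oo ?c p) * (\<Prod>p<m. beta2_fps oo ?c p)
      = (\<Prod>p<m. (beta2_fps * inverse_fact_odd_fps) oo ?c p)"
    by (simp add: prod.distrib[symmetric] fps_compose_mult_distrib mult.commute)
  then have "inverse (mzv_replicate_fps (2 * m) oo fps_X ^ m) = (\<Prod>p<m. beta2_fps oo ?c p)"
    by (intro fps_inverse_unique)
      (simp add: mzv_replicate_fps_even_compose_X_power[OF m] beta2_fps_mult_inverse_fact_odd_fps)
  with m show ?thesis
    by (simp add: fps_inverse_compose)
qed

lemma mzv_replicate_fps_even_nth:
  assumes m: "m \<ge> 1"
  shows "mzv_replicate_fps (2 * m) $ l = (- (of_real pi)\<^sup>2) ^ (m * l) * root_twisted_coeff m inverse_fact_odd_fps (m * l)"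
proof -
  have "mzv_replicate_fps (2 * m) $ l = (mzv_replicate_fps (2 * m) oo fps_X ^ m) $ (m * l)"
    using m by (simp add: fps_nth_compose_X_power)
  also have "\<dots> = (\<Prod>p<m. inverse_fact_odd_fps oo (fps_const (- (of_real pi)\<^sup>2 * root_unity m ^ p) * fps_X)) $ (m * l)"
    by (simp only: mzv_replicate_fps_even_compose_X_power[OF m])
  also have "\<dots> = (- (of_real pi)\<^sup>2) ^ (m * l) * root_twisted_coeff m inverse_fact_odd_fps (m * l)"
    by (rule fps_nth_prod_compose_root_unity[OF m])
  finally show ?thesis .
qed

lemma inverse_mzv_replicate_fps_even_nth:
  assumes m: "m \<ge> 1"
  shows "inverse (mzv_replicate_fps (2 * m)) $ j = (- (of_real pi)\<^sup>2) ^ (m * j) * root_twisted_coeff m beta2_fps (m * j)"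
proof -
  have "inverse (mzv_replicate_fps (2 * m)) $ j = (inverse (mzv_replicate_fps (2 * m)) oo fps_X ^ m) $ (m * j)"
    using m by (simp add: fps_nth_compose_X_power)
  also have "\<dots> = (\<Prod>p<m. beta2_fps oo (fps_const (- (of_real pi)\<^sup>2 * root_unity m ^ p) * fps_X)) $ (m * j)"
    by (simp only: inverse_mzv_replicate_fps_even_compose_X_power[OF m])
  also have "\<dots> = (- (of_real pi)\<^sup>2) ^ (m * j) * root_twisted_coeff m beta2_fps (m * j)"
    by (rule fps_nth_prod_compose_root_unity[OF m])
  finally show ?thesis .
qed

lemma sum_compositions_mzv_t:
  assumes "n \<ge> 1"
  shows "(\<Sum>ks\<in>compositions k n. mzv_t t (map (\<lambda>x. e * x) ks))
       = (\<Sum>r=1..n. of_nat ((k - r) choose (n - r)) * t ^ (n - r)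
            * (\<Sum>p\<in>compositions k r. of_real (mzv (map (\<lambda>x. e * x) p))))"
proof -
  have "mzv_t t (map (\<lambda>x. e * x) ks)
      = sum_list (map (\<lambda>p. t ^ (n - length p) * of_real (mzv (map (\<lambda>x. e * x) p))) (merges ks))"
    if "ks \<in> compositions k n" for ks
  proof -
    have "merges (map (\<lambda>x. e * x) ks) = map (map (\<lambda>x. e * x)) (merges ks)"
      by (rule merges_map) (simp add: algebra_simps)
    with that show ?thesis
      by (simp add: mzv_t_def compositions_def o_def)
  qed
  then have "(\<Sum>ks\<in>compositions k n. mzv_t t (map (\<lambda>x. e * x) ks))
      = (\<Sum>ks\<in>compositions k n.
          sum_list (map (\<lambda>p. t ^ (n - length p) * of_real (mzv (map (\<lambda>x. e * x) p))) (merges ks)))"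
    by (rule sum.cong[OF refl])
  also have "\<dots> = (\<Sum>r=1..n. of_nat ((k - r) choose (n - r))
          * (\<Sum>p\<in>compositions k r. t ^ (n - length p) * of_real (mzv (map (\<lambda>x. e * x) p))))"
    by (rule sum_merges_compositions[OF assms])
  also have "\<dots> = (\<Sum>r=1..n. of_nat ((k - r) choose (n - r)) * t ^ (n - r)
      * (\<Sum>p\<in>compositions k r. of_real (mzv (map (\<lambda>x. e * x) p))))"
    by (intro sum.cong refl) (simp add: sum_distrib_left compositions_def mult.assoc)
  finally show ?thesis .
qed

lemma sum_compositions_mzv_even:
  assumes m: "m \<ge> 1"
  shows "(\<Sum>p\<in>compositions k r. of_real (mzv (map (\<lambda>x. 2 * m * x) p)))
       = (-1) ^ r * (- (of_real pi)\<^sup>2) ^ (k * m)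
         * (\<Sum>j=0..k-r. of_nat ((k - j) choose r)
              * (root_twisted_coeff m beta2_fps (m * j)
                 * root_twisted_coeff m inverse_fact_odd_fps (m * (k - j))))"
proof -
  let ?F = "mzv_replicate_fps (2 * m)"
  have "(\<Sum>p\<in>compositions k r. of_real (mzv (map (\<lambda>x. 2 * m * x) p)))
      = (\<Sum>j=0..k. inverse ?F $ j * ((-1) ^ r * of_nat ((k - j) choose r) * ?F $ (k - j)))"
    using m by (intro sum_compositions_mzv) simp
  also have "\<dots> = (\<Sum>j=0..k-r. inverse ?F $ j * ((-1) ^ r * of_nat ((k - j) choose r) * ?F $ (k - j)))"
    by (rule sum.mono_neutral_right) auto
  also have "\<dots> = (\<Sum>j=0..k-r. (-1) ^ r * (- (of_real pi)\<^sup>2) ^ (k * m) * (of_nat ((k - j) choose r)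
      * (root_twisted_coeff m beta2_fps (m * j) * root_twisted_coeff m inverse_fact_odd_fps (m * (k - j)))))"
  proof (intro sum.cong refl)
    fix j assume "j \<in> {0..k-r}"
    then have "m * j + m * (k - j) = m * (j + (k - j))" "j + (k - j) = k"
      by (simp_all only: add_mult_distrib2) auto
    then have exponent: "m * j + m * (k - j) = k * m" by simp
    have "inverse ?F $ j * ((-1) ^ r * of_nat ((k - j) choose r) * ?F $ (k - j))
        = (-1) ^ r * ((- (of_real pi)\<^sup>2) ^ (m * j) * (- (of_real pi)\<^sup>2) ^ (m * (k - j)))
          * (of_nat ((k - j) choose r) * (root_twisted_coeff m beta2_fps (m * j)
             * root_twisted_coeff m inverse_fact_odd_fps (m * (k - j))))"
      by (simp only: inverse_mzv_replicate_fps_even_nth[OF m] mzv_replicate_fps_even_nth[OF m]) (simp add: mult_ac)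
    then show "inverse ?F $ j * ((-1) ^ r * of_nat ((k - j) choose r) * ?F $ (k - j))
        = (-1) ^ r * (- (of_real pi)\<^sup>2) ^ (k * m) * (of_nat ((k - j) choose r)
          * (root_twisted_coeff m beta2_fps (m * j) * root_twisted_coeff m inverse_fact_odd_fps (m * (k - j))))"
      by (simp only: exponent flip: power_add)
  qed
  finally show ?thesis
    by (simp add: sum_distrib_left)
qed

lemma root_twisted_coeff_mult_explicit:
  assumes m: "m \<ge> 1"
  shows "(\<Sum>ns \<in> {ns. length ns = m \<and> sum_list ns = a}.
            \<Sum>ls \<in> {ls. length ls = m \<and> sum_list ls = b}.
              (\<Prod>p<m. complex_of_real (beta2 (ns ! p) / (fact (2 * (ns ! p)) * fact (2 * (ls ! p) + 1))))
              * exp (complex_of_real pi * \<i> / of_nat m) ^ (\<Sum>p<m. 2 * p * (ns ! p + ls ! p)))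
       = root_twisted_coeff m beta2_fps a * root_twisted_coeff m inverse_fact_odd_fps b"
proof -
  let ?\<rho> = "exp (complex_of_real pi * \<i> / of_nat m)"
  have "?\<rho> ^ (2 * p * (x + y)) = root_unity m ^ (p * x) * root_unity m ^ (p * y)" for p x y
  proof -
    have "?\<rho> ^ (2 * p * (x + y)) = ?\<rho> ^ (2 * (p * x)) * ?\<rho> ^ (2 * (p * y))"
      by (simp add: algebra_simps flip: power_add)
    then show ?thesis
      by (simp only: power_mult exp_pi_div_squared[OF m])
  qed
  then have "?\<rho> ^ (\<Sum>p<m. 2 * p * (ns ! p + ls ! p))
      = (\<Prod>p<m. root_unity m ^ (p * ns ! p) * root_unity m ^ (p * ls ! p))" for ns ls :: "nat list"
    by (simp add: power_sum)
  then show ?thesis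
    by (simp add: root_twisted_coeff_def natpermute_def beta2_fps_def inverse_fact_odd_fps_def
        sum_product prod.distrib[symmetric] mult_ac)
qed

lemma mult_lambda_power_div:
  "z * (2 * complex_of_real pi * \<i>) ^ (2 * k * m) / 4 ^ (k * m) = z * (- (of_real pi)\<^sup>2) ^ (k * m)"
proof -
  have "(2 * complex_of_real pi * \<i>) ^ 2 = 4 * (- (of_real pi)\<^sup>2)"
    by (simp add: power_mult_distrib)
  then have "(2 * complex_of_real pi * \<i>) ^ (2 * k * m) = 4 ^ (k * m) * (- (of_real pi)\<^sup>2) ^ (k * m)"
    by (simp only: mult.assoc power_mult power_mult_distrib)
  then show ?thesis by simp
qed

theorem theorem4p12:
  fixes k n m :: nat and t :: complex
  assumes "k \<ge> 1" "n \<ge> 1" "m \<ge> 1" "k \<ge> n"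
  shows "(\<Sum>ks \<in> {ks. length ks = n \<and> (\<forall>x\<in>set ks. x \<ge> 1) \<and> sum_list ks = k}.
            mzv_t t (map (\<lambda>x. 2 * m * x) ks))
       = (\<Sum>i = 1..n.
            (\<Sum>j = 0..k - i. of_nat ((k - j) choose i) *
               (\<Sum>ns \<in> {ns. length ns = m \<and> sum_list ns = m * j}.
                 \<Sum>ls \<in> {ls. length ls = m \<and> sum_list ls = m * (k - j)}.
                   (\<Prod>p<m. complex_of_real (beta2 (ns ! p)
                        / (fact (2 * (ns ! p)) * fact (2 * (ls ! p) + 1))))
                   * exp (complex_of_real pi * \<i> / of_nat m)
                       ^ (\<Sum>p<m. 2 * p * (ns ! p + ls ! p))))
            * (-1) ^ i * of_nat ((k - i) choose (k - n)) * t ^ (n - i))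
         * (2 * complex_of_real pi * \<i>) ^ (2 * k * m) / 4 ^ (k * m)"
proof -
  have binom: "(k - i) choose (n - i) = (k - i) choose (k - n)" if "i \<in> {1..n}" for i
    using that assms binomial_symmetric[of "n - i" "k - i"] by auto
  show ?thesis
    unfolding compositions_def[symmetric] sum_compositions_mzv_t[OF \<open>n \<ge> 1\<close>]
      sum_compositions_mzv_even[OF \<open>m \<ge> 1\<close>] root_twisted_coeff_mult_explicit[OF \<open>m \<ge> 1\<close>]
      mult_lambda_power_div
    unfolding sum_distrib_right
    by (intro sum.cong refl) (simp add: binom sum_distrib_left mult_ac)
qed

end
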